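(* Let $X$ be a proper geodesic metric space, $e\in X$ and $N$ a Morse gauge. There exists $K_2>0$ depending only on $N$ such that: if $\lambda_-,\lambda_+\in\partial X^{(N)}_e$ are distinct and $\gamma,\gamma':(-\infty,\infty)\to X$ are geodesics, with $\gamma(0),\gamma'(0)$ closest points to $e$ along $\gamma,\gamma'$ respectively, both bi-asymptotic to $(\lambda_-,\lambda_+)$, then $d_{Haus}(\gamma,\gamma')<K_2$.
   Context: A Morse gauge is a function $N:\mathbb{R}_{\geq 1}\times\mathbb{R}_{\geq 0}\to\mathbb{R}_{\geq 0}$; a (quasi)geodesic is $N$-Morse if every $(K,C)$-quasigeodesic with endpoints on it lies in its $N(K,C)$-neighborhood. $X^{(N)}_e$ is the set of $y\in X$ such that some geodesic $[e,y]$ is $N$-Morse; $\partial X^{(N)}_e$ is its sequential Gromov boundary, whose points are represented by $N$-Morse geodesic rays from $e$ (for proper $X$). A biinfinite geodesic $\gamma$, parametrized so $\gamma(0)$ is a closest point of $\gamma$ to $e$, is forward asymptotic to $\lambda\in\partial X^{(N)}_e$ if for any $N$-Morse geodesic ray $\gamma_\lambda$ from $e$ representing $\lambda$, $d_{Haus}(\gamma([0,\infty)),\gamma_\lambda([0,\infty)))<\infty$; backward asymptotic is defined with $\gamma((-\infty,0])$; $\gamma$ is bi-asymptotic to $(\lambda_-,\lambda_+)$ if it is backward asymptotic to $\lambda_-$ and forward asymptotic to $\lambda_+$ (the ordering convention is immaterial for the statement). *)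

theory Defs
  imports "HOL-Analysis.Analysis"
begin

text \<open>Metric spaces are given explicitly by a carrier X and a metric d, so that a
constant "depending only on N" can be quantified uniformly over all spaces.\<close>

definition proper_metric :: "'a set \<Rightarrow> ('a \<Rightarrow> 'a \<Rightarrow> real) \<Rightarrow> bool" where
  "proper_metric X d \<longleftrightarrow> Metric_space X d \<and>
     (\<forall>x\<in>X. \<forall>r\<ge>0. compactin (Metric_space.mtopology X d) (Metric_space.mcball X d x r))"

definition isometric_on :: "'a set \<Rightarrow> ('a \<Rightarrow> 'a \<Rightarrow> real) \<Rightarrow> real set \<Rightarrow> (real \<Rightarrow> 'a) \<Rightarrow> bool" where
  "isometric_on X d I g \<longleftrightarrow> (\<forall>s\<in>I. \<forall>t\<in>I. g s \<in> X \<and> d (g s) (g t) = \<bar>s - t\<bar>)"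

definition geodesic_space :: "'a set \<Rightarrow> ('a \<Rightarrow> 'a \<Rightarrow> real) \<Rightarrow> bool" where
  "geodesic_space X d \<longleftrightarrow> (\<forall>x\<in>X. \<forall>y\<in>X. \<exists>g. g 0 = x \<and> g (d x y) = y \<and> isometric_on X d {0..d x y} g)"

definition quasigeodesic :: "'a set \<Rightarrow> ('a \<Rightarrow> 'a \<Rightarrow> real) \<Rightarrow> real \<Rightarrow> real \<Rightarrow> real set \<Rightarrow> (real \<Rightarrow> 'a) \<Rightarrow> bool" where
  "quasigeodesic X d K C I q \<longleftrightarrow> (\<forall>s\<in>I. \<forall>t\<in>I. q s \<in> X \<and>
      \<bar>s - t\<bar> / K - C \<le> d (q s) (q t) \<and> d (q s) (q t) \<le> K * \<bar>s - t\<bar> + C)"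

definition morse_geodesic :: "'a set \<Rightarrow> ('a \<Rightarrow> 'a \<Rightarrow> real) \<Rightarrow> (real \<Rightarrow> real \<Rightarrow> real) \<Rightarrow> real set \<Rightarrow> (real \<Rightarrow> 'a) \<Rightarrow> bool" where
  "morse_geodesic X d N I g \<longleftrightarrow> isometric_on X d I g \<and>
     (\<forall>K C a b q. K \<ge> 1 \<longrightarrow> C \<ge> 0 \<longrightarrow> a \<le> b \<longrightarrow> quasigeodesic X d K C {a..b} q \<longrightarrow>
        q a \<in> g ` I \<longrightarrow> q b \<in> g ` I \<longrightarrow> (\<forall>t\<in>{a..b}. \<exists>s\<in>I. d (q t) (g s) \<le> N K C))"

definition morse_ray :: "'a set \<Rightarrow> ('a \<Rightarrow> 'a \<Rightarrow> real) \<Rightarrow> (real \<Rightarrow> real \<Rightarrow> real) \<Rightarrow> 'a \<Rightarrow> (real \<Rightarrow> 'a) \<Rightarrow> bool" where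
  "morse_ray X d N e g \<longleftrightarrow> g 0 = e \<and> morse_geodesic X d N {0..} g"

definition haus_le :: "('a \<Rightarrow> 'a \<Rightarrow> real) \<Rightarrow> 'a set \<Rightarrow> 'a set \<Rightarrow> real \<Rightarrow> bool" where
  "haus_le d A B D \<longleftrightarrow> (\<forall>a\<in>A. \<exists>b\<in>B. d a b \<le> D) \<and> (\<forall>b\<in>B. \<exists>a\<in>A. d a b \<le> D)"

definition haus_finite :: "('a \<Rightarrow> 'a \<Rightarrow> real) \<Rightarrow> 'a set \<Rightarrow> 'a set \<Rightarrow> bool" where
  "haus_finite d A B \<longleftrightarrow> (\<exists>D. haus_le d A B D)"

definition haus_less :: "('a \<Rightarrow> 'a \<Rightarrow> real) \<Rightarrow> 'a set \<Rightarrow> 'a set \<Rightarrow> real \<Rightarrow> bool" where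
  "haus_less d A B r \<longleftrightarrow> (\<exists>D<r. haus_le d A B D)"

text \<open>The N-Morse boundary based at e: N-Morse geodesic rays from e, modulo
finite Hausdorff distance; a point is the set of rays representing it.\<close>
definition morse_boundary :: "'a set \<Rightarrow> ('a \<Rightarrow> 'a \<Rightarrow> real) \<Rightarrow> (real \<Rightarrow> real \<Rightarrow> real) \<Rightarrow> 'a \<Rightarrow> (real \<Rightarrow> 'a) set set" where
  "morse_boundary X d N e =
     {{b. morse_ray X d N e b \<and> haus_finite d (b ` {0..}) (a ` {0..})} | a. morse_ray X d N e a}"

definition forward_asymptotic :: "('a \<Rightarrow> 'a \<Rightarrow> real) \<Rightarrow> (real \<Rightarrow> 'a) \<Rightarrow> (real \<Rightarrow> 'a) set \<Rightarrow> bool" where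
  "forward_asymptotic d g lam \<longleftrightarrow> (\<forall>b\<in>lam. haus_finite d (g ` {0..}) (b ` {0..}))"

definition backward_asymptotic :: "('a \<Rightarrow> 'a \<Rightarrow> real) \<Rightarrow> (real \<Rightarrow> 'a) \<Rightarrow> (real \<Rightarrow> 'a) set \<Rightarrow> bool" where
  "backward_asymptotic d g lam \<longleftrightarrow> (\<forall>b\<in>lam. haus_finite d (g ` {..0}) (b ` {0..}))"

definition bi_asymptotic :: "('a \<Rightarrow> 'a \<Rightarrow> real) \<Rightarrow> (real \<Rightarrow> 'a) \<Rightarrow> (real \<Rightarrow> 'a) set \<Rightarrow> (real \<Rightarrow> 'a) set \<Rightarrow> bool" where
  "bi_asymptotic d g lm lp \<longleftrightarrow> backward_asymptotic d g lm \<and> forward_asymptotic d g lp"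

end

theory Submission
  imports Defs
begin

text \<open>
  Let \<alpha> and \<beta> be N-Morse rays from e representing the two boundary points, and let \<gamma> be a
  line, with \<gamma> 0 a closest point to e, lying at finite Hausdorff distance from \<alpha> backwards
  and from \<beta> forwards. A lim-inf argument on the distance from \<gamma> s to \<beta> produces arbitrarily
  late points of \<gamma> within N(3,1) of \<beta>: between two almost minimal late times the detour
  \<beta> \<rightarrow> \<gamma> \<rightarrow> \<beta> is a (3,1)-quasigeodesic, so its turning point is close to \<beta>.
  Because \<gamma> 0 is a closest point to e, a geodesic [e, \<gamma> 0] followed by \<gamma>[0,s] and a short
  segment back to \<beta> is a (3, 2N(3,1))-quasigeodesic between points of \<beta>; the Morse property
  then puts all of \<gamma>[0,\<infinity>) uniformly close to \<beta>, and a discrete continuity argument puts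
  every point of \<beta> uniformly close to [e, \<gamma> 0] \<union> \<gamma>[0,\<infinity>). The same holds for \<alpha>, and
  for a second such line \<gamma>'. Comparing the two closest points through \<alpha> and \<beta> shows that
  d(e, \<gamma> 0) and d(e, \<gamma>' 0) differ by a constant depending only on N, and then each line lies
  in a uniform neighbourhood of the other.
\<close>

lemma isometric_on_mem: "isometric_on X d I g \<Longrightarrow> s \<in> I \<Longrightarrow> g s \<in> X"
  unfolding isometric_on_def by blast

lemma isometric_on_dist: "isometric_on X d I g \<Longrightarrow> s \<in> I \<Longrightarrow> t \<in> I \<Longrightarrow> d (g s) (g t) = \<bar>s - t\<bar>"
  unfolding isometric_on_def by blast

lemma isometric_on_translate: "isometric_on X d UNIV \<gamma> \<Longrightarrow> isometric_on X d I (\<lambda>t. \<gamma> (a + t))"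
  unfolding isometric_on_def by auto

lemma isometric_on_subset: "isometric_on X d J g \<Longrightarrow> I \<subseteq> J \<Longrightarrow> isometric_on X d I g"
  unfolding isometric_on_def by blast

lemma range_reflect: "range (\<lambda>s. f (- s :: real)) = range f"
proof
  show "range f \<subseteq> range (\<lambda>s. f (- s))"
  proof
    fix y assume "y \<in> range f"
    then obtain s where "y = (\<lambda>s. f (- s)) (- s)" by auto
    then show "y \<in> range (\<lambda>s. f (- s))" by blast
  qed
qed auto

lemma isometric_on_reflect: "isometric_on X d UNIV \<gamma> \<Longrightarrow> isometric_on X d UNIV (\<lambda>t. \<gamma> (- t))"
  unfolding isometric_on_def by (auto simp: abs_minus_commute)

lemma quasigeodesic_mem: "quasigeodesic X d K C I q \<Longrightarrow> s \<in> I \<Longrightarrow> q s \<in> X"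
  unfolding quasigeodesic_def by blast

lemma quasigeodesic_dist_le:
  "quasigeodesic X d K C I q \<Longrightarrow> s \<in> I \<Longrightarrow> t \<in> I \<Longrightarrow> d (q s) (q t) \<le> K * \<bar>s - t\<bar> + C"
  unfolding quasigeodesic_def by blast

lemma morse_geodesic_isometric: "morse_geodesic X d N I g \<Longrightarrow> isometric_on X d I g"
  unfolding morse_geodesic_def by blast

lemma morse_geodesicD:
  assumes "morse_geodesic X d N I g" "K \<ge> 1" "C \<ge> 0" "a \<le> b" "quasigeodesic X d K C {a..b} q"
    "q a \<in> g ` I" "q b \<in> g ` I" "t \<in> {a..b}"
  shows "\<exists>s\<in>I. d (q t) (g s) \<le> N K C"
  using assms unfolding morse_geodesic_def by blast

lemma morse_ray_fellow_travels:
  assumes "morse_geodesic X d N {0..} \<beta>" "K \<ge> 1" "C \<ge> 0" "0 \<le> L"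
    "quasigeodesic X d K C {0..L} q" "q 0 = \<beta> 0" "q L = \<beta> u" "0 \<le> u"
  shows "\<forall>\<tau>\<in>{0..L}. \<exists>w\<ge>0. d (q \<tau>) (\<beta> w) \<le> N K C"
proof
  fix \<tau> assume "\<tau> \<in> {0..L}"
  with assms have "\<exists>w\<in>{0..}. d (q \<tau>) (\<beta> w) \<le> N K C"
    by (intro morse_geodesicD[OF assms(1-5)]) auto
  then show "\<exists>w\<ge>0. d (q \<tau>) (\<beta> w) \<le> N K C" by auto
qed

section \<open>Concatenated geodesic segments\<close>

definition path_join :: "(real \<Rightarrow> 'a) \<Rightarrow> real \<Rightarrow> (real \<Rightarrow> 'a) \<Rightarrow> real \<Rightarrow> 'a" where
  "path_join f l g t = (if t \<le> l then f t else g (t - l))"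

lemma path_join_left: "t \<le> l \<Longrightarrow> path_join f l g t = f t"
  by (simp add: path_join_def)

lemma path_join_right: "f l = g 0 \<Longrightarrow> 0 \<le> t \<Longrightarrow> path_join f l g (l + t) = g t"
  by (auto simp: path_join_def)

lemma path_join3_values:
  assumes "f0 l0 = f1 0" "f1 l1 = f2 0" "0 \<le> l0" "0 \<le> l1"
  shows "path_join (path_join f0 l0 f1) (l0 + l1) f2 0 = f0 0"
    and "a \<le> l0 \<Longrightarrow> path_join (path_join f0 l0 f1) (l0 + l1) f2 a = f0 a"
    and "\<tau> \<in> {0..l1} \<Longrightarrow> path_join (path_join f0 l0 f1) (l0 + l1) f2 (l0 + \<tau>) = f1 \<tau>"
    and "0 \<le> b \<Longrightarrow> path_join (path_join f0 l0 f1) (l0 + l1) f2 (l0 + l1 + b) = f2 b"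
  using assms path_join_right[of "path_join f0 l0 f1" "l0 + l1" f2]
  by (auto simp: path_join_left path_join_right)

lemma path_join3_cases:
  assumes "f0 l0 = f1 0" "f1 l1 = f2 0" "0 \<le> l0" "0 \<le> l1" "\<tau> \<in> {0..l0 + l1 + l2}"
  obtains a where "a \<in> {0..l0}" "path_join (path_join f0 l0 f1) (l0 + l1) f2 \<tau> = f0 a"
    | t where "t \<in> {0..l1}" "path_join (path_join f0 l0 f1) (l0 + l1) f2 \<tau> = f1 t"
    | b where "b \<in> {0..l2}" "path_join (path_join f0 l0 f1) (l0 + l1) f2 \<tau> = f2 b"
proof -
  note joined = path_join3_values[of f0 l0 f1 l1 f2, OF assms(1-4)]
  consider "\<tau> \<le> l0" | "l0 \<le> \<tau>" "\<tau> \<le> l0 + l1" | "l0 + l1 \<le> \<tau>" by linarith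
  then show ?thesis
  proof cases
    case 1
    then show ?thesis using that(1)[of \<tau>] joined(2) assms(5) by simp
  next
    case 2
    then show ?thesis using that(2)[of "\<tau> - l0"] joined(3)[of "\<tau> - l0"] by simp
  next
    case 3
    then show ?thesis using that(3)[of "\<tau> - l0 - l1"] joined(4)[of "\<tau> - l0 - l1"] assms(5) by simp
  qed
qed

definition coarse_segment ::
    "'a set \<Rightarrow> ('a \<Rightarrow> 'a \<Rightarrow> real) \<Rightarrow> real \<Rightarrow> real \<Rightarrow> real \<Rightarrow> (real \<Rightarrow> 'a) \<Rightarrow> bool" where
  "coarse_segment X d K C l q \<longleftrightarrow> (\<forall>s\<in>{0..l}. \<forall>t\<in>{0..l}. q s \<in> X \<and>
     \<bar>s - t\<bar> / K - C \<le> d (q s) (q t) \<and> d (q s) (q t) \<le> \<bar>s - t\<bar>)"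

lemma isometric_on_coarse_segment:
  assumes f: "isometric_on X d {0..l} f" and K: "K \<ge> 1" and C: "C \<ge> 0"
  shows "coarse_segment X d K C l f"
proof -
  have "\<bar>s - t\<bar> / K \<le> \<bar>s - t\<bar>" for s t :: real
    using mult_right_mono[OF K abs_ge_zero[of "s - t"]] K by (simp add: divide_le_eq mult.commute)
  then show ?thesis
    using f C unfolding coarse_segment_def isometric_on_def by (smt (verit))
qed

lemma coarse_segment_quasigeodesic:
  assumes q: "coarse_segment X d K C l q" and K: "K \<ge> 1" and C: "C \<ge> 0"
  shows "quasigeodesic X d K C {0..l} q"
  unfolding quasigeodesic_def
proof (intro ballI conjI)
  fix s t assume "s \<in> {0..l}" "t \<in> {0..l}"
  with q have *: "q s \<in> X" "\<bar>s - t\<bar> / K - C \<le> d (q s) (q t)" "d (q s) (q t) \<le> \<bar>s - t\<bar>"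
    unfolding coarse_segment_def by blast+
  then show "q s \<in> X" "\<bar>s - t\<bar> / K - C \<le> d (q s) (q t)" by simp_all
  have "\<bar>s - t\<bar> \<le> K * \<bar>s - t\<bar>" using mult_right_mono[OF K abs_ge_zero[of "s - t"]] by simp
  with *(3) C show "d (q s) (q t) \<le> K * \<bar>s - t\<bar> + C" by linarith
qed

context Metric_space
begin

lemma coarse_segment_join:
  assumes f: "coarse_segment M d K C l f" and g: "coarse_segment M d K C l' g"
    and fg: "f l = g 0" and l: "0 \<le> l" "0 \<le> l'"
    and cross: "\<forall>a\<in>{0..l}. \<forall>b\<in>{0..l'}. ((l - a) + b) / K - C \<le> d (f a) (g b)"
  shows "coarse_segment M d K C (l + l') (path_join f l g)"
proof -
  let ?q = "path_join f l g"
  have fD: "f a \<in> M \<and> \<bar>a - b\<bar> / K - C \<le> d (f a) (f b) \<and> d (f a) (f b) \<le> \<bar>a - b\<bar>"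
    if "a \<in> {0..l}" "b \<in> {0..l}" for a b
    using f that unfolding coarse_segment_def by blast
  have gD: "g a \<in> M \<and> \<bar>a - b\<bar> / K - C \<le> d (g a) (g b) \<and> d (g a) (g b) \<le> \<bar>a - b\<bar>"
    if "a \<in> {0..l'}" "b \<in> {0..l'}" for a b
    using g that unfolding coarse_segment_def by blast
  have q_right: "?q t = g (t - l)" if "l \<le> t" for t
    using path_join_right[of f l g "t - l", OF fg] that by simp
  have ordered: "?q s \<in> M \<and> ?q t \<in> M \<and> (t - s) / K - C \<le> d (?q s) (?q t) \<and> d (?q s) (?q t) \<le> t - s"
    if st: "0 \<le> s" "s \<le> t" "t \<le> l + l'" for s t
  proof -
    consider "t \<le> l" | "l \<le> s" | "s \<le> l" "l \<le> t" by linarith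
    then show ?thesis
    proof cases
      case 1
      then show ?thesis using st fD[of s t] fD[of t t] by (simp add: path_join_left)
    next
      case 2
      then show ?thesis using st gD[of "s - l" "t - l"] gD[of "t - l" "t - l"] q_right by simp
    next
      case 3
      have qs: "?q s = f s" and qt: "?q t = g (t - l)" using 3 q_right by (auto simp: path_join_left)
      have inM: "f s \<in> M" "f l \<in> M" "g (t - l) \<in> M" using 3 st fD[of s s] fD[of l l] gD[of "t - l" "t - l"] l by auto
      have "d (f s) (g (t - l)) \<le> d (f s) (f l) + d (g 0) (g (t - l))"
        using triangle[OF inM] fg by simp
      also have "\<dots> \<le> t - s" using 3 st fD[of s l] gD[of 0 "t - l"] l by simp
      finally have "d (f s) (g (t - l)) \<le> t - s" .
      moreover have "(t - s) / K - C \<le> d (f s) (g (t - l))"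
        using cross[rule_format, of s "t - l"] 3 st by simp
      ultimately show ?thesis using qs qt inM by simp
    qed
  qed
  show ?thesis unfolding coarse_segment_def
  proof (intro ballI)
    fix s t assume s: "s \<in> {0..l + l'}" and t: "t \<in> {0..l + l'}"
    show "?q s \<in> M \<and> \<bar>s - t\<bar> / K - C \<le> d (?q s) (?q t) \<and> d (?q s) (?q t) \<le> \<bar>s - t\<bar>"
    proof (cases "s \<le> t")
      case True then show ?thesis using ordered[of s t] s t by simp
    next
      case False then show ?thesis using ordered[of t s] s t commute[of "?q s" "?q t"] by simp
    qed
  qed
qed

lemma isometric_join3_quasigeodesic:
  assumes f0: "isometric_on M d {0..l0} f0" and f1: "isometric_on M d {0..l1} f1"
    and f2: "isometric_on M d {0..l2} f2"
    and joins: "f0 l0 = f1 0" "f1 l1 = f2 0"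
    and l: "0 \<le> l0" "0 \<le> l1" "0 \<le> l2" and K: "K \<ge> 1" and C: "C \<ge> 0"
    and cross01: "\<forall>a\<in>{0..l0}. \<forall>\<tau>\<in>{0..l1}. ((l0 - a) + \<tau>) / K - C \<le> d (f0 a) (f1 \<tau>)"
    and cross12: "\<forall>\<tau>\<in>{0..l1}. \<forall>b\<in>{0..l2}. ((l1 - \<tau>) + b) / K - C \<le> d (f1 \<tau>) (f2 b)"
    and cross02: "\<forall>a\<in>{0..l0}. \<forall>b\<in>{0..l2}. ((l0 - a) + l1 + b) / K - C \<le> d (f0 a) (f2 b)"
  shows "quasigeodesic M d K C {0..l0 + l1 + l2} (path_join (path_join f0 l0 f1) (l0 + l1) f2)"
proof -
  note segment = isometric_on_coarse_segment[OF _ K C]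
  let ?p = "path_join f0 l0 f1"
  have "coarse_segment M d K C (l0 + l1) ?p"
    by (rule coarse_segment_join[OF segment[OF f0] segment[OF f1] joins(1) l(1,2) cross01])
  moreover have "?p (l0 + l1) = f2 0"
    using path_join_right[of f0 l0 f1 l1, OF joins(1) l(2)] joins(2) by simp
  moreover have "\<forall>x\<in>{0..l0 + l1}. \<forall>b\<in>{0..l2}. ((l0 + l1 - x) + b) / K - C \<le> d (?p x) (f2 b)"
  proof (intro ballI)
    fix x b assume x: "x \<in> {0..l0 + l1}" and b: "b \<in> {0..l2}"
    show "((l0 + l1 - x) + b) / K - C \<le> d (?p x) (f2 b)"
    proof (cases "x \<le> l0")
      case True
      have "(l0 + l1 - x) + b = (l0 - x) + l1 + b" by simp
      then show ?thesis using cross02[rule_format, of x b] x b True by (simp only: path_join_left) simp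
    next
      case False
      have "((l0 + l1 - x) + b) / K - C = ((l1 - (x - l0)) + b) / K - C" by simp
      also have "\<dots> \<le> d (f1 (x - l0)) (f2 b)" using cross12 x b False by simp
      also have "\<dots> = d (?p x) (f2 b)"
        using path_join_right[of f0 l0 f1 "x - l0", OF joins(1)] False by simp
      finally show ?thesis .
    qed
  qed
  ultimately have "coarse_segment M d K C (l0 + l1 + l2) (path_join ?p (l0 + l1) f2)"
    using coarse_segment_join[OF _ segment[OF f2]] l by simp
  then show ?thesis using coarse_segment_quasigeodesic K C by blast
qed

end

section \<open>Lines frequently close to a Morse ray\<close>

lemma liminf_approximation:
  fixes h :: "real \<Rightarrow> real"
  assumes nonneg: "\<And>s. 0 \<le> h s" and bounded: "\<And>s. 0 \<le> s \<Longrightarrow> h s \<le> D" and \<epsilon>: "0 < \<epsilon>"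
  obtains H T0 where "0 \<le> H" "0 \<le> T0" "\<And>s. T0 \<le> s \<Longrightarrow> H - \<epsilon> < h s"
    "\<And>T. 0 \<le> T \<Longrightarrow> \<exists>s\<ge>T. h s < H + \<epsilon>"
proof -
  define m where "m T = Inf (h ` {T..})" for T
  have bdd_tail: "bdd_below (h ` {T..})" for T
    using nonneg by (auto intro: bdd_belowI[where m=0])
  have m_le: "m T \<le> h s" if "T \<le> s" for T s
    unfolding m_def using that bdd_tail by (auto intro: cInf_lower)
  have m_nonneg: "0 \<le> m T" for T
    unfolding m_def using nonneg by (auto intro: cInf_greatest)
  define H where "H = Sup (m ` {0..})"
  have bdd_m: "bdd_above (m ` {0..})"
    using m_le bounded by (auto intro!: bdd_aboveI[where M=D] intro: order.trans)
  have m_H: "m T \<le> H" if "0 \<le> T" for T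
    unfolding H_def using that bdd_m by (auto intro: cSup_upper)
  obtain T0 where T0: "0 \<le> T0" "H - \<epsilon> < m T0"
    using less_cSup_iff[of "m ` {0..}" "H - \<epsilon>"] bdd_m \<epsilon> unfolding H_def[symmetric] by auto
  show ?thesis
  proof
    show "0 \<le> H" using m_H[of 0] m_nonneg[of 0] by simp
    show "0 \<le> T0" by (fact T0(1))
    show "H - \<epsilon> < h s" if "T0 \<le> s" for s using m_le[OF that] T0(2) by simp
    show "\<exists>s\<ge>T. h s < H + \<epsilon>" if "0 \<le> T" for T
    proof -
      have "m T < H + \<epsilon>" using m_H[OF that] \<epsilon> by simp
      then show ?thesis
        using cInf_less_iff[of "h ` {T..}" "H + \<epsilon>"] bdd_tail unfolding m_def by auto
    qed
  qed
qed

context Metric_space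
begin

definition ray_dist :: "(real \<Rightarrow> 'a) \<Rightarrow> 'a \<Rightarrow> real" where
  "ray_dist b x = Inf ((\<lambda>u. d x (b u)) ` {0..})"

lemma ray_dist_le: "0 \<le> u \<Longrightarrow> ray_dist b x \<le> d x (b u)"
  unfolding ray_dist_def by (rule cInf_lower) (auto intro: bdd_belowI[where m=0])

lemma ray_dist_nonneg: "0 \<le> ray_dist b x"
  unfolding ray_dist_def by (rule cInf_greatest) auto

lemma ray_dist_approx: "0 < \<epsilon> \<Longrightarrow> \<exists>u\<ge>0. d x (b u) < ray_dist b x + \<epsilon>"
proof -
  have "bdd_below ((\<lambda>u. d x (b u)) ` {0..})" by (auto intro: bdd_belowI[where m=0])
  moreover assume "0 < \<epsilon>"
  ultimately show ?thesis
    using cInf_less_iff[of "(\<lambda>u. d x (b u)) ` {0..}" "ray_dist b x + \<epsilon>"]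
    unfolding ray_dist_def by auto
qed

lemma ray_dist_triangle:
  assumes "x \<in> M" "y \<in> M" "\<forall>u\<ge>0. b u \<in> M"
  shows "ray_dist b x \<le> d x y + ray_dist b y"
proof -
  have "ray_dist b x - d x y \<le> ray_dist b y"
    unfolding ray_dist_def [of b y]
  proof (rule cInf_greatest)
    fix z assume "z \<in> (\<lambda>u. d y (b u)) ` {0..}"
    then obtain u where u: "0 \<le> u" "z = d y (b u)" by auto
    have "ray_dist b x \<le> d x y + d y (b u)"
      using ray_dist_le[OF u(1), of b x] triangle[of x y "b u"] assms u by auto
    then show "ray_dist b x - d x y \<le> z" using u by simp
  qed auto
  then show ?thesis by simp
qed

text \<open>
  The middle piece stays at distance about H from \<beta>, while the two connecting segments to \<beta>
  are shorter than about H; hence the detour cannot backtrack.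
\<close>

lemma detour_quasigeodesic:
  fixes \<beta> \<gamma> f0 f2 :: "real \<Rightarrow> 'a"
  assumes \<beta>: "\<forall>u\<ge>0. \<beta> u \<in> M" and \<gamma>: "isometric_on M d UNIV \<gamma>"
    and f0: "isometric_on M d {0..l0} f0" "f0 0 = \<beta> u1" "f0 l0 = \<gamma> s1" "0 \<le> u1"
    and f2: "isometric_on M d {0..l2} f2" "f2 0 = \<gamma> s2" "f2 l2 = \<beta> u2" "0 \<le> u2"
    and far: "\<forall>\<tau>\<in>{0..s2 - s1}. H - 1/3 < ray_dist \<beta> (\<gamma> (s1 + \<tau>))"
    and short: "l0 < H + 2/3" "l2 < H + 2/3" and long: "s1 + 4 * H + 4 \<le> s2"
    and nonneg: "0 \<le> H" "0 \<le> l0" "0 \<le> l2"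
  shows "quasigeodesic M d 3 1 {0..l0 + (s2 - s1) + l2}
           (path_join (path_join f0 l0 (\<lambda>\<tau>. \<gamma> (s1 + \<tau>))) (l0 + (s2 - s1)) f2)"
proof (rule isometric_join3_quasigeodesic[OF f0(1) isometric_on_translate[OF \<gamma>] f2(1)])
  let ?l1 = "s2 - s1"
  have \<gamma>M: "\<gamma> t \<in> M" for t using isometric_on_mem[OF \<gamma>] by simp
  have \<gamma>d: "d (\<gamma> s) (\<gamma> t) = \<bar>s - t\<bar>" for s t using isometric_on_dist[OF \<gamma>] by simp
  have f0M: "f0 a \<in> M" if "a \<in> {0..l0}" for a using isometric_on_mem[OF f0(1) that] .
  have f2M: "f2 b \<in> M" if "b \<in> {0..l2}" for b using isometric_on_mem[OF f2(1) that] .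
  have f0_end: "d (f0 a) (\<gamma> s1) = l0 - a" if "a \<in> {0..l0}" for a
    using isometric_on_dist[OF f0(1) that, of l0] f0(3) that nonneg by auto
  have f0_ray: "ray_dist \<beta> (f0 a) \<le> a" if "a \<in> {0..l0}" for a
    using ray_dist_le[OF f0(4), of \<beta> "f0 a"] isometric_on_dist[OF f0(1) that, of 0] f0(2) that nonneg
    by auto
  have f2_start: "d (\<gamma> s2) (f2 b) = b" if "b \<in> {0..l2}" for b
    using isometric_on_dist[OF f2(1), of 0 b] f2(2) that nonneg by auto
  have f2_ray: "ray_dist \<beta> (f2 b) \<le> l2 - b" if "b \<in> {0..l2}" for b
    using ray_dist_le[OF f2(4), of \<beta> "f2 b"] isometric_on_dist[OF f2(1) that, of l2] f2(3) that nonneg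
    by auto
  show "f0 l0 = \<gamma> (s1 + 0)" "\<gamma> (s1 + ?l1) = f2 0" using f0(3) f2(2) by simp_all
  show "0 \<le> l0" "0 \<le> ?l1" "0 \<le> l2" "(1::real) \<le> 3" "(0::real) \<le> 1" using nonneg long by auto
  show "\<forall>a\<in>{0..l0}. \<forall>\<tau>\<in>{0..?l1}. ((l0 - a) + \<tau>) / 3 - 1 \<le> d (f0 a) (\<gamma> (s1 + \<tau>))"
  proof (intro ballI)
    fix a \<tau> assume a: "a \<in> {0..l0}" and \<tau>: "\<tau> \<in> {0..?l1}"
    have "\<tau> - (l0 - a) \<le> d (f0 a) (\<gamma> (s1 + \<tau>))"
      using triangle[of "\<gamma> s1" "f0 a" "\<gamma> (s1 + \<tau>)"] f0M[OF a] \<gamma>M \<gamma>d[of s1 "s1 + \<tau>"]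
        f0_end[OF a] commute[of "f0 a" "\<gamma> s1"] \<tau> by simp
    moreover have "H - 1/3 - a < d (f0 a) (\<gamma> (s1 + \<tau>))"
      using ray_dist_triangle[of "\<gamma> (s1 + \<tau>)" "f0 a" \<beta>] \<gamma>M f0M[OF a] \<beta> far \<tau> f0_ray[OF a]
        commute[of "f0 a" "\<gamma> (s1 + \<tau>)"] by fastforce
    ultimately show "((l0 - a) + \<tau>) / 3 - 1 \<le> d (f0 a) (\<gamma> (s1 + \<tau>))" using short by (simp add: field_simps)
  qed
  show "\<forall>\<tau>\<in>{0..?l1}. \<forall>b\<in>{0..l2}. ((?l1 - \<tau>) + b) / 3 - 1 \<le> d (\<gamma> (s1 + \<tau>)) (f2 b)"
  proof (intro ballI)
    fix \<tau> b assume \<tau>: "\<tau> \<in> {0..?l1}" and b: "b \<in> {0..l2}"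
    have "(?l1 - \<tau>) - b \<le> d (\<gamma> (s1 + \<tau>)) (f2 b)"
      using triangle[of "\<gamma> (s1 + \<tau>)" "f2 b" "\<gamma> s2"] f2M[OF b] \<gamma>M \<gamma>d[of "s1 + \<tau>" s2]
        f2_start[OF b] commute[of "f2 b" "\<gamma> s2"] \<tau> by simp
    moreover have "H - 1/3 - (l2 - b) < d (\<gamma> (s1 + \<tau>)) (f2 b)"
      using ray_dist_triangle[of "\<gamma> (s1 + \<tau>)" "f2 b" \<beta>] \<gamma>M f2M[OF b] \<beta> far \<tau> f2_ray[OF b]
      by fastforce
    ultimately show "((?l1 - \<tau>) + b) / 3 - 1 \<le> d (\<gamma> (s1 + \<tau>)) (f2 b)" using short by (simp add: field_simps)
  qed
  show "\<forall>a\<in>{0..l0}. \<forall>b\<in>{0..l2}. ((l0 - a) + ?l1 + b) / 3 - 1 \<le> d (f0 a) (f2 b)"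
  proof (intro ballI)
    fix a b assume a: "a \<in> {0..l0}" and b: "b \<in> {0..l2}"
    have "d (\<gamma> s1) (\<gamma> s2) \<le> d (\<gamma> s1) (f0 a) + (d (f0 a) (f2 b) + d (f2 b) (\<gamma> s2))"
      using triangle[of "\<gamma> s1" "f0 a" "\<gamma> s2"] triangle[of "f0 a" "f2 b" "\<gamma> s2"]
        f0M[OF a] f2M[OF b] \<gamma>M by fastforce
    then have "?l1 - (l0 - a) - b \<le> d (f0 a) (f2 b)"
      using \<gamma>d[of s1 s2] f0_end[OF a] f2_start[OF b] commute[of "f0 a" "\<gamma> s1"]
        commute[of "f2 b" "\<gamma> s2"] long nonneg by simp
    then show "((l0 - a) + ?l1 + b) / 3 - 1 \<le> d (f0 a) (f2 b)" using a b short long by (simp add: field_simps)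
  qed
qed

lemma line_frequently_near_morse_ray:
  assumes \<beta>: "morse_geodesic M d N {0..} \<beta>" and \<gamma>: "isometric_on M d UNIV \<gamma>"
    and geo: "geodesic_space M d" and bounded: "\<forall>s\<ge>0. \<exists>u\<ge>0. d (\<gamma> s) (\<beta> u) \<le> D"
  shows "\<exists>s\<ge>T. \<exists>u\<ge>0. d (\<gamma> s) (\<beta> u) \<le> N 3 1"
proof -
  have \<beta>M: "\<forall>u\<ge>0. \<beta> u \<in> M" using isometric_on_mem[OF morse_geodesic_isometric[OF \<beta>]] by simp
  have \<gamma>M: "\<gamma> t \<in> M" for t using isometric_on_mem[OF \<gamma>] by simp
  define h where "h s = ray_dist \<beta> (\<gamma> s)" for s
  have hD: "h s \<le> D" if s: "0 \<le> s" for s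
  proof -
    from bounded s obtain u where u: "0 \<le> u" "d (\<gamma> s) (\<beta> u) \<le> D" by blast
    have "h s \<le> d (\<gamma> s) (\<beta> u)" unfolding h_def by (rule ray_dist_le[OF u(1)])
    with u(2) show ?thesis by linarith
  qed
  have h0: "0 \<le> h s" for s unfolding h_def by (rule ray_dist_nonneg)
  obtain H T0 where H: "0 \<le> H" "\<And>s. T0 \<le> s \<Longrightarrow> H - 1/3 < h s"
      "\<And>T. 0 \<le> T \<Longrightarrow> \<exists>s\<ge>T. h s < H + 1/3"
    by (rule liminf_approximation[of h D "1/3", OF h0 hD]) auto
  obtain s1 where s1: "max (max T T0) 0 \<le> s1" "h s1 < H + 1/3"
    using H(3)[of "max (max T T0) 0"] by auto
  obtain u1 where u1: "0 \<le> u1" "d (\<gamma> s1) (\<beta> u1) < h s1 + 1/3"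
    using ray_dist_approx[of "1/3" "\<gamma> s1" \<beta>] unfolding h_def by auto
  obtain s2 where s2: "s1 + 4 * H + 4 \<le> s2" "h s2 < H + 1/3"
    using H(3)[of "s1 + 4 * H + 4"] H(1) s1(1) by auto
  obtain u2 where u2: "0 \<le> u2" "d (\<gamma> s2) (\<beta> u2) < h s2 + 1/3"
    using ray_dist_approx[of "1/3" "\<gamma> s2" \<beta>] unfolding h_def by auto
  define l0 where "l0 = d (\<beta> u1) (\<gamma> s1)"
  define l2 where "l2 = d (\<gamma> s2) (\<beta> u2)"
  obtain f0 where f0: "f0 0 = \<beta> u1" "f0 l0 = \<gamma> s1" "isometric_on M d {0..l0} f0"
    using geo \<beta>M u1(1) \<gamma>M unfolding geodesic_space_def l0_def by blast
  obtain f2 where f2: "f2 0 = \<gamma> s2" "f2 l2 = \<beta> u2" "isometric_on M d {0..l2} f2"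
    using geo \<beta>M u2(1) \<gamma>M unfolding geodesic_space_def l2_def by blast
  have l: "0 \<le> l0" "0 \<le> l2" "0 \<le> s2 - s1" using s2(1) H(1) by (auto simp: l0_def l2_def)
  let ?q = "path_join (path_join f0 l0 (\<lambda>\<tau>. \<gamma> (s1 + \<tau>))) (l0 + (s2 - s1)) f2"
  have q: "quasigeodesic M d 3 1 {0..l0 + (s2 - s1) + l2} ?q"
  proof (rule detour_quasigeodesic[where H=H, OF \<beta>M \<gamma> f0(3,1,2) u1(1) f2(3,1,2) u2(1)])
    show "\<forall>\<tau>\<in>{0..s2 - s1}. H - 1/3 < ray_dist \<beta> (\<gamma> (s1 + \<tau>))"
      using H(2) s1(1) unfolding h_def by auto
    show "l0 < H + 2/3" using u1(2) s1(2) commute[of "\<beta> u1" "\<gamma> s1"] unfolding l0_def by simp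
    show "l2 < H + 2/3" using u2(2) s2(2) unfolding l2_def by simp
    show "s1 + 4 * H + 4 \<le> s2" by (fact s2(1))
    show "0 \<le> H" "0 \<le> l0" "0 \<le> l2" using H(1) l by simp_all
  qed
  have ends: "?q 0 = \<beta> u1" "?q (l0 + (s2 - s1) + l2) = \<beta> u2" "?q l0 = \<gamma> s1"
    using path_join3_values[of f0 l0 "\<lambda>\<tau>. \<gamma> (s1 + \<tau>)" "s2 - s1" f2] f0 f2 l by simp_all
  have "\<exists>v\<in>{0..}. d (?q l0) (\<beta> v) \<le> N 3 1"
  proof (rule morse_geodesicD[OF \<beta> _ _ _ q])
    show "?q 0 \<in> \<beta> ` {0..}" using ends(1) u1(1) by simp
    show "?q (l0 + (s2 - s1) + l2) \<in> \<beta> ` {0..}" using ends(2) u2(1) by simp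
  qed (use l in simp_all)
  then show ?thesis using ends(3) s1(1) by auto
qed

section \<open>Paths through the closest point\<close>

text \<open>Since \<gamma> 0 is a point of \<gamma> closest to e, the corner at \<gamma> 0 is coarsely straight.\<close>

lemma closest_point_corner:
  assumes \<gamma>: "isometric_on M d UNIV \<gamma>" and e: "e \<in> M" and closest: "\<forall>t. d e (\<gamma> 0) \<le> d e (\<gamma> t)"
    and g: "isometric_on M d {0..r} g" "g 0 = e" "g r = \<gamma> 0" and r: "r = d e (\<gamma> 0)"
    and a: "a \<in> {0..r}" and \<tau>: "0 \<le> \<tau>"
  shows "((r - a) + \<tau>) / 3 \<le> d (g a) (\<gamma> \<tau>)"
proof -
  have gaM: "g a \<in> M" using isometric_on_mem[OF g(1) a] .
  have \<gamma>M: "\<gamma> t \<in> M" for t using isometric_on_mem[OF \<gamma>] by simp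
  have "d e (\<gamma> \<tau>) \<le> a + d (g a) (\<gamma> \<tau>)"
    using triangle[OF e gaM \<gamma>M[of \<tau>]] isometric_on_dist[OF g(1), of 0 a] g(2) a by auto
  then have "r - a \<le> d (g a) (\<gamma> \<tau>)" using closest r by (smt (verit))
  moreover have "d (\<gamma> 0) (\<gamma> \<tau>) \<le> (r - a) + d (g a) (\<gamma> \<tau>)"
    using triangle[OF \<gamma>M[of 0] gaM \<gamma>M[of \<tau>]] isometric_on_dist[OF g(1) a, of r] g(3) a
      commute[of "g a" "\<gamma> 0"] by auto
  then have "\<tau> - (r - a) \<le> d (g a) (\<gamma> \<tau>)" using isometric_on_dist[OF \<gamma>, of 0 \<tau>] \<tau> by simp
  ultimately show ?thesis by simp
qed

lemma closest_point_path_quasigeodesic: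
  fixes \<gamma> g \<beta> :: "real \<Rightarrow> 'a"
  assumes \<beta>: "isometric_on M d {0..} \<beta>" and \<gamma>: "isometric_on M d UNIV \<gamma>"
    and geo: "geodesic_space M d" and e: "e \<in> M" and closest: "\<forall>t. d e (\<gamma> 0) \<le> d e (\<gamma> t)"
    and g: "isometric_on M d {0..r} g" "g 0 = e" "g r = \<gamma> 0" and r: "r = d e (\<gamma> 0)"
    and s: "0 \<le> s" and u: "0 \<le> u" and close: "d (\<gamma> s) (\<beta> u) \<le> c"
  obtains Q L where "quasigeodesic M d 3 (2 * c) {0..L} Q" "Q 0 = e" "Q L = \<beta> u" "r + s \<le> L"
    "\<forall>t\<in>{0..s}. Q (r + t) = \<gamma> t"
    "\<forall>\<tau>\<in>{0..L}. (\<exists>a\<in>{0..r}. Q \<tau> = g a) \<or> (\<exists>t\<in>{0..s}. Q \<tau> = \<gamma> t) \<or> d (Q \<tau>) (\<gamma> s) \<le> c"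
proof -
  have \<gamma>M: "\<gamma> t \<in> M" for t using isometric_on_mem[OF \<gamma>] by simp
  have \<gamma>d: "d (\<gamma> t) (\<gamma> t') = \<bar>t - t'\<bar>" for t t' using isometric_on_dist[OF \<gamma>] by simp
  have r0: "0 \<le> r" using r by simp
  have c: "0 \<le> c" using close nonneg[of "\<gamma> s" "\<beta> u"] by linarith
  define l where "l = d (\<gamma> s) (\<beta> u)"
  have l0: "0 \<le> l" unfolding l_def by simp
  obtain f where f: "f 0 = \<gamma> s" "f l = \<beta> u" "isometric_on M d {0..l} f"
    using geo \<gamma>M isometric_on_mem[OF \<beta>] u unfolding geodesic_space_def l_def by blast
  have fM: "f b \<in> M" if "b \<in> {0..l}" for b using isometric_on_mem[OF f(3) that] .
  have f_start: "d (f b) (\<gamma> s) = b" "b \<le> c" if "b \<in> {0..l}" for b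
    using isometric_on_dist[OF f(3), of b 0] f(1) that close l_def by auto
  note corner = closest_point_corner[OF \<gamma> e closest g r]
  let ?Q = "path_join (path_join g r \<gamma>) (r + s) f"
  have q: "quasigeodesic M d 3 (2 * c) {0..r + s + l} ?Q"
  proof (rule isometric_join3_quasigeodesic[OF g(1) isometric_on_subset[OF \<gamma> subset_UNIV] f(3)])
    show "g r = \<gamma> 0" "\<gamma> s = f 0" using g(3) f(1) by simp_all
    show "0 \<le> r" "0 \<le> s" "0 \<le> l" "(1::real) \<le> 3" "0 \<le> 2 * c"
      using r0 s l0 c by auto
    show "\<forall>a\<in>{0..r}. \<forall>\<tau>\<in>{0..s}. ((r - a) + \<tau>) / 3 - 2 * c \<le> d (g a) (\<gamma> \<tau>)"
    proof (intro ballI)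
      fix a \<tau> assume "a \<in> {0..r}" "\<tau> \<in> {0..s}"
      then show "((r - a) + \<tau>) / 3 - 2 * c \<le> d (g a) (\<gamma> \<tau>)" using corner[of a \<tau>] c by (simp add: field_simps)
    qed
    show "\<forall>\<tau>\<in>{0..s}. \<forall>b\<in>{0..l}. ((s - \<tau>) + b) / 3 - 2 * c \<le> d (\<gamma> \<tau>) (f b)"
    proof (intro ballI)
      fix \<tau> b assume \<tau>: "\<tau> \<in> {0..s}" and b: "b \<in> {0..l}"
      have "(s - \<tau>) - b \<le> d (\<gamma> \<tau>) (f b)"
        using triangle[OF \<gamma>M fM[OF b] \<gamma>M, of \<tau> s] \<gamma>d[of \<tau> s] \<tau> f_start(1)[OF b] by simp
      then show "((s - \<tau>) + b) / 3 - 2 * c \<le> d (\<gamma> \<tau>) (f b)"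
        using f_start(2)[OF b] b \<tau> by (simp add: field_simps)
    qed
    show "\<forall>a\<in>{0..r}. \<forall>b\<in>{0..l}. ((r - a) + s + b) / 3 - 2 * c \<le> d (g a) (f b)"
    proof (intro ballI)
      fix a b assume a: "a \<in> {0..r}" and b: "b \<in> {0..l}"
      have "((r - a) + s) / 3 - b \<le> d (g a) (f b)"
        using triangle[OF isometric_on_mem[OF g(1) a] fM[OF b] \<gamma>M, of s] corner[OF a s]
          f_start(1)[OF b] by (simp add: field_simps)
      then show "((r - a) + s + b) / 3 - 2 * c \<le> d (g a) (f b)"
        using f_start(2)[OF b] b by (simp add: field_simps)
    qed
  qed
  note joined = path_join3_values[of g r \<gamma> s f, OF g(3) f(1)[symmetric] r0 s]
  show ?thesis
  proof (rule that[OF q])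
    show "?Q 0 = e" "?Q (r + s + l) = \<beta> u" using joined(1) joined(4)[OF l0] g(2) f(2) by simp_all
    show "r + s \<le> r + s + l" using l0 by simp
    show "\<forall>t\<in>{0..s}. ?Q (r + t) = \<gamma> t" using joined(3) by blast
    show "\<forall>\<tau>\<in>{0..r + s + l}. (\<exists>a\<in>{0..r}. ?Q \<tau> = g a) \<or> (\<exists>t\<in>{0..s}. ?Q \<tau> = \<gamma> t)
        \<or> d (?Q \<tau>) (\<gamma> s) \<le> c"
    proof
      fix \<tau> assume \<tau>: "\<tau> \<in> {0..r + s + l}"
      show "(\<exists>a\<in>{0..r}. ?Q \<tau> = g a) \<or> (\<exists>t\<in>{0..s}. ?Q \<tau> = \<gamma> t) \<or> d (?Q \<tau>) (\<gamma> s) \<le> c"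
      proof (rule path_join3_cases[of g r \<gamma> s f, OF g(3) f(1)[symmetric] r0 s \<tau>])
        fix b assume "b \<in> {0..l}" "?Q \<tau> = f b"
        then show ?thesis using f_start[of b] commute[of "f b" "\<gamma> s"] by simp
      qed blast+
    qed
  qed
qed

text \<open>
  Points of \<beta> close to consecutive points of a coarse path move by at most 2c + m along \<beta>,
  so a path from \<beta> 0 to \<beta> u cannot jump over \<beta> v without passing near it.
\<close>

lemma ray_shadow_step:
  assumes \<beta>: "isometric_on M d {0..} \<beta>" and x: "x \<in> M" and y: "y \<in> M"
    and w: "0 \<le> w" and w': "0 \<le> w'" and v: "0 \<le> v"
    and x_near: "d x (\<beta> w) \<le> c" and y_near: "d y (\<beta> w') \<le> c" and step: "d x y \<le> m"
    and before: "w' < v" and far: "3 * c + m < d (\<beta> v) x"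
  shows "w < v"
proof (rule ccontr)
  assume "\<not> w < v"
  have \<beta>M: "\<beta> t \<in> M" if "0 \<le> t" for t using isometric_on_mem[OF \<beta>] that by simp
  have \<beta>d: "d (\<beta> t) (\<beta> t') = \<bar>t - t'\<bar>" if "0 \<le> t" "0 \<le> t'" for t t'
    using isometric_on_dist[OF \<beta>] that by simp
  have "d (\<beta> w) (\<beta> w') \<le> d (\<beta> w) x + (d x y + d y (\<beta> w'))"
    using triangle[OF \<beta>M[OF w] x \<beta>M[OF w']] triangle[OF x y \<beta>M[OF w']] by linarith
  then have "w - v \<le> 2 * c + m"
    using \<beta>d[OF w w'] x_near y_near step before commute[of "\<beta> w" x] abs_ge_self[of "w - w'"]
    by linarith
  then have "d (\<beta> v) x \<le> 3 * c + m"
    using triangle[OF \<beta>M[OF v] \<beta>M[OF w] x] \<beta>d[OF v w] \<open>\<not> w < v\<close> x_near commute[of "\<beta> w" x]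
    by simp
  then show False using far by linarith
qed

lemma ray_shadow_before:
  fixes Q \<beta> :: "real \<Rightarrow> 'a"
  assumes \<beta>: "isometric_on M d {0..} \<beta>"
    and near: "\<forall>\<tau>\<in>{0..L}. \<exists>w\<ge>0. d (Q \<tau>) (\<beta> w) \<le> c"
    and steps: "\<forall>\<tau>\<in>{0..L}. \<forall>\<tau>'\<in>{0..L}. \<bar>\<tau> - \<tau>'\<bar> \<le> 1 \<longrightarrow> d (Q \<tau>) (Q \<tau>') \<le> m"
    and QM: "\<forall>\<tau>\<in>{0..L}. Q \<tau> \<in> M" and Q0: "Q 0 = \<beta> 0" and L: "0 \<le> L" and v: "0 \<le> v"
    and far: "\<forall>\<tau>\<in>{0..L}. 3 * c + m < d (\<beta> v) (Q \<tau>)"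
  shows "\<forall>w\<ge>0. d (Q (min (real k) L)) (\<beta> w) \<le> c \<longrightarrow> w < v"
proof (induction k)
  case 0
  have Q0M: "Q 0 \<in> M" using QM L by simp
  have "\<exists>w\<ge>0. d (Q 0) (\<beta> w) \<le> c" "d (Q 0) (Q 0) \<le> m" using near steps L by simp_all
  then have c: "0 \<le> c" and m: "0 \<le> m" using nonneg by (meson order.trans)+
  have far0: "3 * c + m < d (\<beta> v) (Q 0)" using far L by simp
  moreover have "d (\<beta> v) (Q 0) = v" using isometric_on_dist[OF \<beta>, of v 0] v Q0 by simp
  ultimately have "0 < v" using c m by linarith
  show ?case
  proof (intro allI impI)
    fix w :: real assume w: "0 \<le> w" "d (Q (min (real 0) L)) (\<beta> w) \<le> c"
    show "w < v"
    proof (rule ray_shadow_step[OF \<beta> Q0M Q0M w(1) order_refl v _ _ _ \<open>0 < v\<close> far0])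
      show "d (Q 0) (\<beta> w) \<le> c" using w(2) L by simp
      show "d (Q 0) (\<beta> 0) \<le> c" "d (Q 0) (Q 0) \<le> m" using Q0 Q0M c m by simp_all
    qed
  qed
next
  case (Suc k)
  let ?t = "min (real k) L" and ?t' = "min (real (Suc k)) L"
  have t: "?t \<in> {0..L}" "?t' \<in> {0..L}" "\<bar>?t' - ?t\<bar> \<le> 1" using L by auto
  show ?case
  proof (intro allI impI)
    fix w :: real assume w: "0 \<le> w" "d (Q ?t') (\<beta> w) \<le> c"
    obtain w' where w': "0 \<le> w'" "d (Q ?t) (\<beta> w') \<le> c" using near t(1) by blast
    show "w < v"
    proof (rule ray_shadow_step[OF \<beta> _ _ w(1) w'(1) v w(2) w'(2)])
      show "Q ?t' \<in> M" "Q ?t \<in> M" using QM t by simp_all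
      show "d (Q ?t') (Q ?t) \<le> m" using steps t by simp
      show "w' < v" using Suc.IH w' by blast
      show "3 * c + m < d (\<beta> v) (Q ?t')" using far t(2) by blast
    qed
  qed
qed

lemma coarse_path_near_ray_points:
  fixes Q \<beta> :: "real \<Rightarrow> 'a"
  assumes \<beta>: "isometric_on M d {0..} \<beta>"
    and near: "\<forall>\<tau>\<in>{0..L}. \<exists>w\<ge>0. d (Q \<tau>) (\<beta> w) \<le> c"
    and steps: "\<forall>\<tau>\<in>{0..L}. \<forall>\<tau>'\<in>{0..L}. \<bar>\<tau> - \<tau>'\<bar> \<le> 1 \<longrightarrow> d (Q \<tau>) (Q \<tau>') \<le> m"
    and QM: "\<forall>\<tau>\<in>{0..L}. Q \<tau> \<in> M" and Q0: "Q 0 = \<beta> 0" and QL: "Q L = \<beta> u"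
    and L: "0 \<le> L" and v: "0 \<le> v" "v \<le> u"
  shows "\<exists>\<tau>\<in>{0..L}. d (\<beta> v) (Q \<tau>) \<le> 3 * c + m"
proof (rule ccontr)
  assume "\<not> ?thesis"
  then have far: "\<forall>\<tau>\<in>{0..L}. 3 * c + m < d (\<beta> v) (Q \<tau>)" by (meson not_le)
  from near L have "\<exists>w\<ge>0. d (Q 0) (\<beta> w) \<le> c" by simp
  then obtain w where "d (Q 0) (\<beta> w) \<le> c" by blast
  then have "0 \<le> c" using nonneg[of "Q 0" "\<beta> w"] by linarith
  moreover have "min (real (nat \<lceil>L\<rceil>)) L = L" using L by linarith
  ultimately have "d (Q (min (real (nat \<lceil>L\<rceil>)) L)) (\<beta> u) \<le> c"
    using QL isometric_on_mem[OF \<beta>, of u] v by simp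
  then have "u < v"
    using ray_shadow_before[OF \<beta> near steps QM Q0 L v(1) far, of "nat \<lceil>L\<rceil>"] v by simp
  then show False using v by simp
qed

lemma line_forward_near_morse_ray:
  assumes \<beta>: "morse_geodesic M d N {0..} \<beta>" "\<beta> 0 = e" and \<gamma>: "isometric_on M d UNIV \<gamma>"
    and geo: "geodesic_space M d" and e: "e \<in> M" and closest: "\<forall>t. d e (\<gamma> 0) \<le> d e (\<gamma> t)"
    and frequent: "\<And>T. \<exists>s\<ge>T. \<exists>u\<ge>0. d (\<gamma> s) (\<beta> u) \<le> c"
  shows "\<forall>t\<ge>0. \<exists>u\<ge>0. d (\<gamma> t) (\<beta> u) \<le> N 3 (2 * c)"
proof (intro allI impI)
  fix t :: real assume t: "0 \<le> t"
  define r where "r = d e (\<gamma> 0)"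
  obtain g where g: "g 0 = e" "g r = \<gamma> 0" "isometric_on M d {0..r} g"
    using geo e isometric_on_mem[OF \<gamma>] unfolding geodesic_space_def r_def by blast
  obtain s u where su: "t \<le> s" "0 \<le> u" "d (\<gamma> s) (\<beta> u) \<le> c" using frequent[of t] by blast
  have c: "0 \<le> c" using su(3) nonneg[of "\<gamma> s" "\<beta> u"] by linarith
  obtain Q L where Q: "quasigeodesic M d 3 (2 * c) {0..L} Q" "Q 0 = e" "Q L = \<beta> u" "r + s \<le> L"
      "\<forall>t'\<in>{0..s}. Q (r + t') = \<gamma> t'"
    by (rule closest_point_path_quasigeodesic[OF morse_geodesic_isometric[OF \<beta>(1)] \<gamma> geo e closest
          g(3,1,2) r_def _ su(2,3)]) (use t su(1) in auto)
  have "r + t \<in> {0..L}" using Q(4) t su(1) r_def by simp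
  moreover have "\<forall>\<tau>\<in>{0..L}. \<exists>w\<ge>0. d (Q \<tau>) (\<beta> w) \<le> N 3 (2 * c)"
    by (rule morse_ray_fellow_travels[OF \<beta>(1) _ _ _ Q(1)]) (use Q(2,3) \<open>r + t \<in> {0..L}\<close> \<beta>(2) su c in auto)
  ultimately have "\<exists>w\<ge>0. d (Q (r + t)) (\<beta> w) \<le> N 3 (2 * c)" by blast
  then show "\<exists>u\<ge>0. d (\<gamma> t) (\<beta> u) \<le> N 3 (2 * c)" using Q(5) t su(1) by simp
qed

lemma morse_ray_near_segment_or_line:
  assumes \<beta>: "morse_geodesic M d N {0..} \<beta>" "\<beta> 0 = e" and \<gamma>: "isometric_on M d UNIV \<gamma>"
    and geo: "geodesic_space M d" and e: "e \<in> M" and closest: "\<forall>t. d e (\<gamma> 0) \<le> d e (\<gamma> t)"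
    and g: "isometric_on M d {0..r} g" "g 0 = e" "g r = \<gamma> 0" and r: "r = d e (\<gamma> 0)"
    and frequent: "\<And>T. \<exists>s\<ge>T. \<exists>u\<ge>0. d (\<gamma> s) (\<beta> u) \<le> c"
  defines "R \<equiv> 3 * N 3 (2 * c) + 3 + 3 * c"
  shows "\<forall>v\<ge>0. (\<exists>a\<in>{0..r}. d (\<beta> v) (g a) \<le> R) \<or> (\<exists>t\<ge>0. d (\<beta> v) (\<gamma> t) \<le> R)"
proof (intro allI impI)
  fix v :: real assume v: "0 \<le> v"
  have \<beta>i: "isometric_on M d {0..} \<beta>" using morse_geodesic_isometric[OF \<beta>(1)] .
  have \<gamma>M: "\<gamma> t \<in> M" for t using isometric_on_mem[OF \<gamma>] by simp
  have \<beta>M: "\<beta> w \<in> M" if "0 \<le> w" for w using isometric_on_mem[OF \<beta>i] that by simp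
  obtain s u where su: "v + r + c \<le> s" "0 \<le> u" "d (\<gamma> s) (\<beta> u) \<le> c"
    using frequent[of "v + r + c"] by blast
  have c: "0 \<le> c" using su(3) nonneg[of "\<gamma> s" "\<beta> u"] by linarith
  have s: "0 \<le> s" using su(1) v c r nonneg[of e "\<gamma> 0"] by linarith
  obtain Q L where Q: "quasigeodesic M d 3 (2 * c) {0..L} Q" "Q 0 = e" "Q L = \<beta> u" "r + s \<le> L"
      "\<forall>\<tau>\<in>{0..L}. (\<exists>a\<in>{0..r}. Q \<tau> = g a) \<or> (\<exists>t\<in>{0..s}. Q \<tau> = \<gamma> t) \<or> d (Q \<tau>) (\<gamma> s) \<le> c"
    by (rule closest_point_path_quasigeodesic[OF \<beta>i \<gamma> geo e closest g r s su(2,3)]) blast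
  have L: "0 \<le> L" using Q(4) s r nonneg[of e "\<gamma> 0"] by linarith
  have near: "\<forall>\<tau>\<in>{0..L}. \<exists>w\<ge>0. d (Q \<tau>) (\<beta> w) \<le> N 3 (2 * c)"
    by (rule morse_ray_fellow_travels[OF \<beta>(1) _ _ L Q(1)]) (use Q(2,3) \<beta>(2) su c in auto)
  have "s \<le> d (\<gamma> 0) e + (d e (\<beta> u) + d (\<beta> u) (\<gamma> s))"
    using triangle[OF \<gamma>M e \<gamma>M, of 0 s] triangle[OF e \<beta>M[OF su(2)] \<gamma>M, of s]
      isometric_on_dist[OF \<gamma>, of 0 s] s by simp
  then have "v \<le> u"
    using isometric_on_dist[OF \<beta>i, of 0 u] \<beta>(2) su r commute[of "\<gamma> 0" e] commute[of "\<beta> u" "\<gamma> s"]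
    by simp
  have steps: "\<forall>\<tau>\<in>{0..L}. \<forall>\<tau>'\<in>{0..L}. \<bar>\<tau> - \<tau>'\<bar> \<le> 1 \<longrightarrow> d (Q \<tau>) (Q \<tau>') \<le> 3 + 2 * c"
  proof (intro ballI impI)
    fix \<tau> \<tau>' assume \<tau>: "\<tau> \<in> {0..L}" "\<tau>' \<in> {0..L}" "\<bar>\<tau> - \<tau>'\<bar> \<le> 1"
    then show "d (Q \<tau>) (Q \<tau>') \<le> 3 + 2 * c" using quasigeodesic_dist_le[OF Q(1) \<tau>(1,2)] by (smt (verit))
  qed
  have QM: "\<forall>\<tau>\<in>{0..L}. Q \<tau> \<in> M" using quasigeodesic_mem[OF Q(1)] by blast
  have Q0: "Q 0 = \<beta> 0" using Q(2) \<beta>(2) by simp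
  obtain \<tau> where \<tau>: "\<tau> \<in> {0..L}" "d (\<beta> v) (Q \<tau>) \<le> 3 * N 3 (2 * c) + (3 + 2 * c)"
    using coarse_path_near_ray_points[OF \<beta>i near steps QM Q0 Q(3) L v \<open>v \<le> u\<close>] by blast
  consider "\<exists>a\<in>{0..r}. Q \<tau> = g a" | "\<exists>t\<in>{0..s}. Q \<tau> = \<gamma> t" | "d (Q \<tau>) (\<gamma> s) \<le> c"
    using Q(5) \<tau>(1) by blast
  then show "(\<exists>a\<in>{0..r}. d (\<beta> v) (g a) \<le> R) \<or> (\<exists>t\<ge>0. d (\<beta> v) (\<gamma> t) \<le> R)"
  proof cases
    case 1
    then show ?thesis using \<tau>(2) c unfolding R_def by force
  next
    case 2
    then show ?thesis using \<tau>(2) c unfolding R_def by force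
  next
    case 3
    have "d (\<beta> v) (\<gamma> s) \<le> d (\<beta> v) (Q \<tau>) + d (Q \<tau>) (\<gamma> s)"
      using triangle[OF \<beta>M[OF v] quasigeodesic_mem[OF Q(1) \<tau>(1)] \<gamma>M] .
    then have "d (\<beta> v) (\<gamma> s) \<le> R" using 3 \<tau>(2) unfolding R_def by linarith
    then show ?thesis using s by blast
  qed
qed

section \<open>Comparing two lines\<close>

lemma closest_point_dist_le:
  fixes \<alpha> \<beta> \<gamma> \<gamma>' g :: "real \<Rightarrow> 'a"
  assumes \<alpha>: "isometric_on M d {0..} \<alpha>" "\<alpha> 0 = e" and \<beta>: "isometric_on M d {0..} \<beta>" "\<beta> 0 = e"
    and e: "e \<in> M" and \<gamma>: "isometric_on M d UNIV \<gamma>"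
    and g: "isometric_on M d {0..r} g" "g 0 = e" and r: "r = d e (\<gamma> 0)"
    and forward: "\<forall>v\<ge>0. (\<exists>a\<in>{0..r}. d (\<beta> v) (g a) \<le> R) \<or> (\<exists>t\<ge>0. d (\<beta> v) (\<gamma> t) \<le> R)"
    and backward: "\<forall>v\<ge>0. (\<exists>a\<in>{0..r}. d (\<alpha> v) (g a) \<le> R) \<or> (\<exists>t\<ge>0. d (\<alpha> v) (\<gamma> (- t)) \<le> R)"
    and p: "p \<in> M" and near_\<beta>: "\<exists>u\<ge>0. d p (\<beta> u) \<le> c" and near_\<alpha>: "\<exists>v\<ge>0. d p (\<alpha> v) \<le> c"
    and c: "0 \<le> c" and R: "0 \<le> R"
  shows "d e p \<le> r + 3 * R + 3 * c"
proof -
  have \<gamma>M: "\<gamma> t \<in> M" for t using isometric_on_mem[OF \<gamma>] by simp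
  have \<gamma>d: "d (\<gamma> s) (\<gamma> t) = \<bar>s - t\<bar>" for s t using isometric_on_dist[OF \<gamma>] by simp
  have ray: "\<rho> w \<in> M" "d e (\<rho> w) = w" if "isometric_on M d {0..} \<rho>" "\<rho> 0 = e" "0 \<le> w" for \<rho> w
    using isometric_on_mem[OF that(1)] isometric_on_dist[OF that(1), of 0 w] that(2,3) by auto
  have segment: "d e (\<rho> w) \<le> r + R" if "isometric_on M d {0..} \<rho>" "\<rho> 0 = e" "0 \<le> w"
    and "a \<in> {0..r}" "d (\<rho> w) (g a) \<le> R" for \<rho> w a
    using triangle[OF e isometric_on_mem[OF g(1) that(4)] ray(1)[OF that(1-3)]]
      isometric_on_dist[OF g(1), of 0 a] g(2) that commute[of "g a" "\<rho> w"] by auto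
  obtain u where u: "0 \<le> u" "d p (\<beta> u) \<le> c" using near_\<beta> by blast
  obtain v where v: "0 \<le> v" "d p (\<alpha> v) \<le> c" using near_\<alpha> by blast
  have p_u: "d e p \<le> u + c"
    using triangle[OF e ray(1)[OF \<beta> u(1)] p] ray(2)[OF \<beta> u(1)] u(2) commute[of "\<beta> u" p] by simp
  have p_v: "d e p \<le> v + c"
    using triangle[OF e ray(1)[OF \<alpha> v(1)] p] ray(2)[OF \<alpha> v(1)] v(2) commute[of "\<alpha> v" p] by simp
  consider (seg_\<beta>) a where "a \<in> {0..r}" "d (\<beta> u) (g a) \<le> R"
    | (line_\<beta>) t1 where "0 \<le> t1" "d (\<beta> u) (\<gamma> t1) \<le> R"
    using forward u(1) by blast
  then show ?thesis
  proof cases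
    case seg_\<beta>
    then show ?thesis using segment[OF \<beta> u(1)] ray(2)[OF \<beta> u(1)] p_u c R by fastforce
  next
    case line_\<beta>
    consider (seg_\<alpha>) a where "a \<in> {0..r}" "d (\<alpha> v) (g a) \<le> R"
      | (line_\<alpha>) t2 where "0 \<le> t2" "d (\<alpha> v) (\<gamma> (- t2)) \<le> R"
      using backward v(1) by blast
    then show ?thesis
    proof cases
      case seg_\<alpha>
      then show ?thesis using segment[OF \<alpha> v(1)] ray(2)[OF \<alpha> v(1)] p_v c R by fastforce
    next
      case line_\<alpha>
      note \<beta>uM = ray(1)[OF \<beta> u(1)] and \<alpha>vM = ray(1)[OF \<alpha> v(1)]
      \<comment> \<open>\<gamma> t1 and \<gamma> (- t2) lie on both sides of \<gamma> 0 and are both close to p.\<close>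
      have "d (\<gamma> t1) (\<gamma> (- t2)) \<le> d (\<gamma> t1) (\<beta> u) + (d (\<beta> u) p + (d p (\<alpha> v) + d (\<alpha> v) (\<gamma> (- t2))))"
        using triangle[OF \<gamma>M \<beta>uM \<gamma>M, of t1 "- t2"] triangle[OF \<beta>uM p \<gamma>M, of "- t2"]
          triangle[OF p \<alpha>vM \<gamma>M, of "- t2"] by linarith
      then have "t1 + t2 \<le> 2 * R + 2 * c"
        using \<gamma>d[of t1 "- t2"] line_\<beta> line_\<alpha> u(2) v(2) commute[of "\<gamma> t1" "\<beta> u"] commute[of "\<beta> u" p]
        by simp
      moreover have "u \<le> r + t1 + R"
        using triangle[OF e \<gamma>M \<beta>uM, of 0] triangle[OF \<gamma>M \<gamma>M \<beta>uM, of 0 t1] ray(2)[OF \<beta> u(1)] r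
          \<gamma>d[of 0 t1] line_\<beta> commute[of "\<gamma> t1" "\<beta> u"] by simp
      ultimately show ?thesis using p_u line_\<alpha>(1) by linarith
    qed
  qed
qed

lemma line_forward_near_line:
  fixes \<beta> \<gamma> \<gamma>' g' :: "real \<Rightarrow> 'a"
  assumes \<beta>: "isometric_on M d {0..} \<beta>" and e: "e \<in> M"
    and \<gamma>: "isometric_on M d UNIV \<gamma>" and closest: "\<forall>t. d e (\<gamma> 0) \<le> d e (\<gamma> t)"
    and \<gamma>': "isometric_on M d UNIV \<gamma>'"
    and g': "isometric_on M d {0..r'} g'" "g' 0 = e" "g' r' = \<gamma>' 0"
    and \<gamma>_near: "\<forall>t\<ge>0. \<exists>u\<ge>0. d (\<gamma> t) (\<beta> u) \<le> c"
    and \<beta>_near: "\<forall>v\<ge>0. (\<exists>a\<in>{0..r'}. d (\<beta> v) (g' a) \<le> R) \<or> (\<exists>t\<ge>0. d (\<beta> v) (\<gamma>' t) \<le> R)"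
    and r': "r' \<le> d e (\<gamma> 0) + D" and D: "0 \<le> D"
  shows "\<forall>t\<ge>0. \<exists>y\<in>range \<gamma>'. d (\<gamma> t) y \<le> 2 * (c + R) + D"
proof (intro allI impI)
  fix t :: real assume t: "0 \<le> t"
  have \<gamma>M: "\<gamma> t \<in> M" using isometric_on_mem[OF \<gamma>] by simp
  have \<gamma>'M: "\<gamma>' s \<in> M" for s using isometric_on_mem[OF \<gamma>'] by simp
  obtain u where u: "0 \<le> u" "d (\<gamma> t) (\<beta> u) \<le> c" using \<gamma>_near t by blast
  have \<beta>uM: "\<beta> u \<in> M" using isometric_on_mem[OF \<beta>] u(1) by simp
  consider (seg) a where "a \<in> {0..r'}" "d (\<beta> u) (g' a) \<le> R"
    | (line) t' where "0 \<le> t'" "d (\<beta> u) (\<gamma>' t') \<le> R"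
    using \<beta>_near u(1) by blast
  then show "\<exists>y\<in>range \<gamma>'. d (\<gamma> t) y \<le> 2 * (c + R) + D"
  proof cases
    case line
    have "d (\<gamma> t) (\<gamma>' t') \<le> c + R"
      using triangle[OF \<gamma>M \<beta>uM \<gamma>'M, of t'] u(2) line(2) by linarith
    moreover have "0 \<le> c + R"
      using nonneg[of "\<gamma> t" "\<beta> u"] nonneg[of "\<beta> u" "\<gamma>' t'"] u(2) line(2) by linarith
    ultimately have "d (\<gamma> t) (\<gamma>' t') \<le> 2 * (c + R) + D" using D by (simp add: algebra_simps)
    then show ?thesis by blast
  next
    case seg
    have gaM: "g' a \<in> M" using isometric_on_mem[OF g'(1) seg(1)] .
    have "d (\<gamma> t) (g' a) \<le> c + R"
      using triangle[OF \<gamma>M \<beta>uM gaM] u(2) seg(2) by linarith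
    moreover have "d e (\<gamma> t) \<le> a + d (g' a) (\<gamma> t)"
      using triangle[OF e gaM \<gamma>M] isometric_on_dist[OF g'(1), of 0 a] g'(2) seg(1) by auto
    moreover have "d (g' a) (\<gamma>' 0) = r' - a"
      using isometric_on_dist[OF g'(1) seg(1), of r'] g'(3) seg(1) by auto
    ultimately have "d (g' a) (\<gamma>' 0) \<le> D + (c + R)"
      using closest[rule_format, of t] r' commute[of "g' a" "\<gamma> t"] by linarith
    then have "d (\<gamma> t) (\<gamma>' 0) \<le> 2 * (c + R) + D"
      using triangle[OF \<gamma>M gaM \<gamma>'M, of 0] \<open>d (\<gamma> t) (g' a) \<le> c + R\<close> by (simp add: algebra_simps)
    then show ?thesis by blast
  qed
qed

lemma line_near_line:
  fixes \<alpha> \<beta> \<gamma> \<gamma>' g' :: "real \<Rightarrow> 'a"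
  assumes \<alpha>: "isometric_on M d {0..} \<alpha>" and \<beta>: "isometric_on M d {0..} \<beta>" and e: "e \<in> M"
    and \<gamma>: "isometric_on M d UNIV \<gamma>" and closest: "\<forall>t. d e (\<gamma> 0) \<le> d e (\<gamma> t)"
    and \<gamma>': "isometric_on M d UNIV \<gamma>'"
    and g': "isometric_on M d {0..r'} g'" "g' 0 = e" "g' r' = \<gamma>' 0"
    and \<gamma>_forward: "\<forall>t\<ge>0. \<exists>u\<ge>0. d (\<gamma> t) (\<beta> u) \<le> c"
    and \<gamma>_backward: "\<forall>t\<ge>0. \<exists>u\<ge>0. d (\<gamma> (- t)) (\<alpha> u) \<le> c"
    and \<beta>_near: "\<forall>v\<ge>0. (\<exists>a\<in>{0..r'}. d (\<beta> v) (g' a) \<le> R) \<or> (\<exists>t\<ge>0. d (\<beta> v) (\<gamma>' t) \<le> R)"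
    and \<alpha>_near: "\<forall>v\<ge>0. (\<exists>a\<in>{0..r'}. d (\<alpha> v) (g' a) \<le> R) \<or> (\<exists>t\<ge>0. d (\<alpha> v) (\<gamma>' (- t)) \<le> R)"
    and r': "r' \<le> d e (\<gamma> 0) + D" and D: "0 \<le> D"
  shows "\<forall>x\<in>range \<gamma>. \<exists>y\<in>range \<gamma>'. d x y \<le> 2 * (c + R) + D"
proof
  fix x assume "x \<in> range \<gamma>"
  then obtain t where x: "x = \<gamma> t" by blast
  show "\<exists>y\<in>range \<gamma>'. d x y \<le> 2 * (c + R) + D"
  proof (cases "0 \<le> t")
    case True
    then show ?thesis
      using line_forward_near_line[OF \<beta> e \<gamma> closest \<gamma>' g' \<gamma>_forward \<beta>_near r' D] x by blast
  next
    case False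
    have "\<forall>t\<ge>0. \<exists>y\<in>range (\<lambda>s. \<gamma>' (- s)). d (\<gamma> (- t)) y \<le> 2 * (c + R) + D"
    proof (rule line_forward_near_line[OF \<alpha> e isometric_on_reflect[OF \<gamma>] _
          isometric_on_reflect[OF \<gamma>'] g'(1,2) _ \<gamma>_backward \<alpha>_near _ D])
      show "\<forall>t. d e (\<gamma> (- 0)) \<le> d e (\<gamma> (- t))" "g' r' = \<gamma>' (- 0)" "r' \<le> d e (\<gamma> (- 0)) + D"
        using closest g'(3) r' by simp_all
    qed
    then obtain y where "y \<in> range (\<lambda>s. \<gamma>' (- s))" "d (\<gamma> (- (- t))) y \<le> 2 * (c + R) + D"
      using False by (meson neg_0_le_iff_le nle_le)
    then show ?thesis using x range_reflect[of \<gamma>'] by auto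
  qed
qed

lemma line_between_morse_rays:
  assumes \<alpha>: "morse_geodesic M d N {0..} \<alpha>" "\<alpha> 0 = e"
    and \<beta>: "morse_geodesic M d N {0..} \<beta>" "\<beta> 0 = e"
    and \<gamma>: "isometric_on M d UNIV \<gamma>" and geo: "geodesic_space M d"
    and e: "e \<in> M" and closest: "\<forall>t. d e (\<gamma> 0) \<le> d e (\<gamma> t)"
    and forward: "\<forall>s\<ge>0. \<exists>u\<ge>0. d (\<gamma> s) (\<beta> u) \<le> D\<^sub>\<beta>"
    and backward: "\<forall>s\<ge>0. \<exists>u\<ge>0. d (\<gamma> (- s)) (\<alpha> u) \<le> D\<^sub>\<alpha>"
  defines "c \<equiv> N 3 (2 * N 3 1)" and "R \<equiv> 3 * N 3 (2 * N 3 1) + 3 + 3 * N 3 1"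
  obtains g r where "isometric_on M d {0..r} g" "g 0 = e" "g r = \<gamma> 0" "r = d e (\<gamma> 0)"
    "\<forall>t\<ge>0. \<exists>u\<ge>0. d (\<gamma> t) (\<beta> u) \<le> c" "\<forall>t\<ge>0. \<exists>u\<ge>0. d (\<gamma> (- t)) (\<alpha> u) \<le> c"
    "\<forall>v\<ge>0. (\<exists>a\<in>{0..r}. d (\<beta> v) (g a) \<le> R) \<or> (\<exists>t\<ge>0. d (\<beta> v) (\<gamma> t) \<le> R)"
    "\<forall>v\<ge>0. (\<exists>a\<in>{0..r}. d (\<alpha> v) (g a) \<le> R) \<or> (\<exists>t\<ge>0. d (\<alpha> v) (\<gamma> (- t)) \<le> R)"
proof -
  define r where "r = d e (\<gamma> 0)"
  obtain g where g: "g 0 = e" "g r = \<gamma> 0" "isometric_on M d {0..r} g"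
    using geo e isometric_on_mem[OF \<gamma>] unfolding geodesic_space_def r_def by blast
  let ?\<gamma> = "\<lambda>t. \<gamma> (- t)"
  have \<gamma>': "isometric_on M d UNIV ?\<gamma>" by (rule isometric_on_reflect[OF \<gamma>])
  have closest': "\<forall>t. d e (?\<gamma> 0) \<le> d e (?\<gamma> t)" using closest by simp
  have g': "g r = ?\<gamma> 0" and r': "r = d e (?\<gamma> 0)" using g(2) r_def by simp_all
  have freq_\<beta>: "\<exists>s\<ge>T. \<exists>u\<ge>0. d (\<gamma> s) (\<beta> u) \<le> N 3 1" for T
    by (rule line_frequently_near_morse_ray[OF \<beta>(1) \<gamma> geo forward])
  have freq_\<alpha>: "\<exists>s\<ge>T. \<exists>u\<ge>0. d (?\<gamma> s) (\<alpha> u) \<le> N 3 1" for T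
    by (rule line_frequently_near_morse_ray[OF \<alpha>(1) \<gamma>' geo]) (use backward in simp)
  show ?thesis
  proof (rule that[OF g(3,1,2) r_def])
    show "\<forall>t\<ge>0. \<exists>u\<ge>0. d (\<gamma> t) (\<beta> u) \<le> c"
      unfolding c_def by (rule line_forward_near_morse_ray[OF \<beta> \<gamma> geo e closest freq_\<beta>])
    show "\<forall>t\<ge>0. \<exists>u\<ge>0. d (\<gamma> (- t)) (\<alpha> u) \<le> c"
      unfolding c_def by (rule line_forward_near_morse_ray[OF \<alpha> \<gamma>' geo e closest' freq_\<alpha>])
    show "\<forall>v\<ge>0. (\<exists>a\<in>{0..r}. d (\<beta> v) (g a) \<le> R) \<or> (\<exists>t\<ge>0. d (\<beta> v) (\<gamma> t) \<le> R)"
      unfolding R_def by (rule morse_ray_near_segment_or_line[OF \<beta> \<gamma> geo e closest g(3,1,2) r_def freq_\<beta>])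
    show "\<forall>v\<ge>0. (\<exists>a\<in>{0..r}. d (\<alpha> v) (g a) \<le> R) \<or> (\<exists>t\<ge>0. d (\<alpha> v) (\<gamma> (- t)) \<le> R)"
      unfolding R_def
      by (rule morse_ray_near_segment_or_line[OF \<alpha> \<gamma>' geo e closest' g(3,1) g' r' freq_\<alpha>])
  qed
qed

lemma bi_asymptotic_lines_haus_le:
  assumes \<alpha>: "morse_geodesic M d N {0..} \<alpha>" "\<alpha> 0 = e"
    and \<beta>: "morse_geodesic M d N {0..} \<beta>" "\<beta> 0 = e"
    and geo: "geodesic_space M d" and e: "e \<in> M"
    and \<gamma>: "isometric_on M d UNIV \<gamma>" "\<forall>t. d e (\<gamma> 0) \<le> d e (\<gamma> t)"
    and \<gamma>': "isometric_on M d UNIV \<gamma>'" "\<forall>t. d e (\<gamma>' 0) \<le> d e (\<gamma>' t)"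
    and \<gamma>_bounds: "\<forall>s\<ge>0. \<exists>u\<ge>0. d (\<gamma> s) (\<beta> u) \<le> D1" "\<forall>s\<ge>0. \<exists>u\<ge>0. d (\<gamma> (- s)) (\<alpha> u) \<le> D2"
    and \<gamma>'_bounds: "\<forall>s\<ge>0. \<exists>u\<ge>0. d (\<gamma>' s) (\<beta> u) \<le> D3" "\<forall>s\<ge>0. \<exists>u\<ge>0. d (\<gamma>' (- s)) (\<alpha> u) \<le> D4"
    and N: "0 \<le> N 3 1" "0 \<le> N 3 (2 * N 3 1)"
  defines "c \<equiv> N 3 (2 * N 3 1)" and "R \<equiv> 3 * N 3 (2 * N 3 1) + 3 + 3 * N 3 1"
  shows "haus_le d (range \<gamma>) (range \<gamma>') (5 * c + 5 * R)"
proof -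
  have \<alpha>i: "isometric_on M d {0..} \<alpha>" and \<beta>i: "isometric_on M d {0..} \<beta>"
    using morse_geodesic_isometric \<alpha>(1) \<beta>(1) by blast+
  have cR: "0 \<le> c" "0 \<le> R" "0 \<le> 3 * R + 3 * c" using N unfolding c_def R_def by simp_all
  obtain g r where L: "isometric_on M d {0..r} g" "g 0 = e" "g r = \<gamma> 0" "r = d e (\<gamma> 0)"
    "\<forall>t\<ge>0. \<exists>u\<ge>0. d (\<gamma> t) (\<beta> u) \<le> c" "\<forall>t\<ge>0. \<exists>u\<ge>0. d (\<gamma> (- t)) (\<alpha> u) \<le> c"
    "\<forall>v\<ge>0. (\<exists>a\<in>{0..r}. d (\<beta> v) (g a) \<le> R) \<or> (\<exists>t\<ge>0. d (\<beta> v) (\<gamma> t) \<le> R)"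
    "\<forall>v\<ge>0. (\<exists>a\<in>{0..r}. d (\<alpha> v) (g a) \<le> R) \<or> (\<exists>t\<ge>0. d (\<alpha> v) (\<gamma> (- t)) \<le> R)"
    unfolding c_def R_def by (rule line_between_morse_rays[OF \<alpha> \<beta> \<gamma>(1) geo e \<gamma>(2) \<gamma>_bounds])
  obtain g' r' where L': "isometric_on M d {0..r'} g'" "g' 0 = e" "g' r' = \<gamma>' 0" "r' = d e (\<gamma>' 0)"
    "\<forall>t\<ge>0. \<exists>u\<ge>0. d (\<gamma>' t) (\<beta> u) \<le> c" "\<forall>t\<ge>0. \<exists>u\<ge>0. d (\<gamma>' (- t)) (\<alpha> u) \<le> c"
    "\<forall>v\<ge>0. (\<exists>a\<in>{0..r'}. d (\<beta> v) (g' a) \<le> R) \<or> (\<exists>t\<ge>0. d (\<beta> v) (\<gamma>' t) \<le> R)"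
    "\<forall>v\<ge>0. (\<exists>a\<in>{0..r'}. d (\<alpha> v) (g' a) \<le> R) \<or> (\<exists>t\<ge>0. d (\<alpha> v) (\<gamma>' (- t)) \<le> R)"
    unfolding c_def R_def by (rule line_between_morse_rays[OF \<alpha> \<beta> \<gamma>'(1) geo e \<gamma>'(2) \<gamma>'_bounds])
  have "d e (\<gamma>' 0) \<le> r + 3 * R + 3 * c"
    using closest_point_dist_le[OF \<alpha>i \<alpha>(2) \<beta>i \<beta>(2) e \<gamma>(1) L(1,2,4,7,8) _ _ _ cR(1,2)]
      isometric_on_mem[OF \<gamma>'(1)] L'(5)[rule_format, of 0] L'(6)[rule_format, of 0] by simp
  then have r': "r' \<le> d e (\<gamma> 0) + (3 * R + 3 * c)" using L(4) L'(4) by simp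
  have "d e (\<gamma> 0) \<le> r' + 3 * R + 3 * c"
    using closest_point_dist_le[OF \<alpha>i \<alpha>(2) \<beta>i \<beta>(2) e \<gamma>'(1) L'(1,2,4,7,8) _ _ _ cR(1,2)]
      isometric_on_mem[OF \<gamma>(1)] L(5)[rule_format, of 0] L(6)[rule_format, of 0] by simp
  then have r: "r \<le> d e (\<gamma>' 0) + (3 * R + 3 * c)" using L(4) L'(4) by simp
  have "\<forall>x\<in>range \<gamma>. \<exists>y\<in>range \<gamma>'. d x y \<le> 2 * (c + R) + (3 * R + 3 * c)"
    by (rule line_near_line[OF \<alpha>i \<beta>i e \<gamma> \<gamma>'(1) L'(1-3) L(5,6) L'(7,8) r' cR(3)])
  moreover have "\<forall>y\<in>range \<gamma>'. \<exists>x\<in>range \<gamma>. d y x \<le> 2 * (c + R) + (3 * R + 3 * c)"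
    by (rule line_near_line[OF \<alpha>i \<beta>i e \<gamma>' \<gamma>(1) L(1-3) L'(5,6) L(7,8) r cR(3)])
  moreover have "2 * (c + R) + (3 * R + 3 * c) = 5 * c + 5 * R" by simp
  ultimately show ?thesis unfolding haus_le_def by (metis commute)
qed

end

section \<open>The Morse boundary\<close>

lemma morse_boundary_representative:
  assumes X: "Metric_space X d" and lm: "lm \<in> morse_boundary X d N e"
  obtains \<alpha> where "morse_geodesic X d N {0..} \<alpha>" "\<alpha> 0 = e" "\<alpha> \<in> lm"
proof -
  obtain \<alpha> where \<alpha>: "morse_ray X d N e \<alpha>"
      "lm = {b. morse_ray X d N e b \<and> haus_finite d (b ` {0..}) (\<alpha> ` {0..})}"
    using lm unfolding morse_boundary_def by blast
  have \<alpha>X: "x \<in> X" if "x \<in> \<alpha> ` {0..}" for x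
    using \<alpha>(1) isometric_on_mem that unfolding morse_ray_def morse_geodesic_def by blast
  have "haus_le d (\<alpha> ` {0..}) (\<alpha> ` {0..}) 0"
    unfolding haus_le_def
  proof (intro conjI ballI)
    fix x assume x: "x \<in> \<alpha> ` {0..}"
    show "\<exists>y\<in>\<alpha> ` {0..}. d x y \<le> 0" "\<exists>y\<in>\<alpha> ` {0..}. d y x \<le> 0"
      by (rule bexI[OF _ x], simp add: Metric_space.mdist_zero[OF X \<alpha>X[OF x]])+
  qed
  then have "\<alpha> \<in> lm" using \<alpha> unfolding haus_finite_def by blast
  then show ?thesis using that \<alpha>(1) unfolding morse_ray_def by blast
qed

lemma forward_asymptotic_bound:
  assumes "\<beta> \<in> lp" "forward_asymptotic d \<gamma> lp"
  shows "\<exists>D. \<forall>s\<ge>0. \<exists>u\<ge>0. d (\<gamma> s) (\<beta> u) \<le> D"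
proof -
  obtain D where "\<forall>x\<in>\<gamma> ` {0..}. \<exists>y\<in>\<beta> ` {0..}. d x y \<le> D"
    using assms unfolding forward_asymptotic_def haus_finite_def haus_le_def by blast
  then have "\<forall>s\<ge>0. \<exists>u\<ge>0. d (\<gamma> s) (\<beta> u) \<le> D" by auto
  then show ?thesis by blast
qed

lemma backward_asymptotic_bound:
  assumes "\<alpha> \<in> lm" "backward_asymptotic d \<gamma> lm"
  shows "\<exists>D. \<forall>s\<ge>0. \<exists>u\<ge>0. d (\<gamma> (- s)) (\<alpha> u) \<le> D"
proof -
  obtain D where "\<forall>x\<in>\<gamma> ` {..0}. \<exists>y\<in>\<alpha> ` {0..}. d x y \<le> D"
    using assms unfolding backward_asymptotic_def haus_finite_def haus_le_def by blast
  then have "\<forall>s\<ge>0. \<exists>u\<ge>0. d (\<gamma> (- s)) (\<alpha> u) \<le> D" by auto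
  then show ?thesis by blast
qed

theorem proposition3p12:
  fixes N :: "real \<Rightarrow> real \<Rightarrow> real"
  assumes "\<forall>K\<ge>1. \<forall>C\<ge>0. N K C \<ge> 0"
  shows "\<exists>K2>0. \<forall>(X::'a set) d e lm lp \<gamma> \<gamma>'.
     proper_metric X d \<longrightarrow> geodesic_space X d \<longrightarrow> e \<in> X \<longrightarrow>
     lm \<in> morse_boundary X d N e \<longrightarrow> lp \<in> morse_boundary X d N e \<longrightarrow> lm \<noteq> lp \<longrightarrow>
     isometric_on X d UNIV \<gamma> \<longrightarrow> isometric_on X d UNIV \<gamma>' \<longrightarrow>
     (\<forall>t. d e (\<gamma> 0) \<le> d e (\<gamma> t)) \<longrightarrow> (\<forall>t. d e (\<gamma>' 0) \<le> d e (\<gamma>' t)) \<longrightarrow>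
     bi_asymptotic d \<gamma> lm lp \<longrightarrow> bi_asymptotic d \<gamma>' lm lp \<longrightarrow>
     haus_less d (range \<gamma>) (range \<gamma>') K2"
proof -
  define B where "B = 5 * N 3 (2 * N 3 1) + 5 * (3 * N 3 (2 * N 3 1) + 3 + 3 * N 3 1)"
  have N: "0 \<le> N 3 1" "0 \<le> N 3 (2 * N 3 1)" using assms by simp_all
  have "haus_less d (range \<gamma>) (range \<gamma>') (B + 1)"
    if X: "proper_metric X d" "geodesic_space X d" "e \<in> X"
      and boundary: "lm \<in> morse_boundary X d N e" "lp \<in> morse_boundary X d N e"
      and \<gamma>: "isometric_on X d UNIV \<gamma>" "\<forall>t. d e (\<gamma> 0) \<le> d e (\<gamma> t)" "bi_asymptotic d \<gamma> lm lp"
      and \<gamma>': "isometric_on X d UNIV \<gamma>'" "\<forall>t. d e (\<gamma>' 0) \<le> d e (\<gamma>' t)" "bi_asymptotic d \<gamma>' lm lp"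
    for X :: "'a set" and d e lm lp and \<gamma> \<gamma>' :: "real \<Rightarrow> 'a"
  proof -
    have ms: "Metric_space X d" using X(1) unfolding proper_metric_def by blast
    obtain \<alpha> where \<alpha>: "morse_geodesic X d N {0..} \<alpha>" "\<alpha> 0 = e" "\<alpha> \<in> lm"
      using morse_boundary_representative[OF ms boundary(1)] .
    obtain \<beta> where \<beta>: "morse_geodesic X d N {0..} \<beta>" "\<beta> 0 = e" "\<beta> \<in> lp"
      using morse_boundary_representative[OF ms boundary(2)] .
    obtain D1 D2 D3 D4 where bounds:
      "\<forall>s\<ge>0. \<exists>u\<ge>0. d (\<gamma> s) (\<beta> u) \<le> D1" "\<forall>s\<ge>0. \<exists>u\<ge>0. d (\<gamma> (- s)) (\<alpha> u) \<le> D2"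
      "\<forall>s\<ge>0. \<exists>u\<ge>0. d (\<gamma>' s) (\<beta> u) \<le> D3" "\<forall>s\<ge>0. \<exists>u\<ge>0. d (\<gamma>' (- s)) (\<alpha> u) \<le> D4"
      using forward_asymptotic_bound[OF \<beta>(3)] backward_asymptotic_bound[OF \<alpha>(3)] \<gamma>(3) \<gamma>'(3)
      unfolding bi_asymptotic_def by metis
    have "haus_le d (range \<gamma>) (range \<gamma>') B"
      unfolding B_def by (rule Metric_space.bi_asymptotic_lines_haus_le[where N=N,
          OF ms \<alpha>(1,2) \<beta>(1,2) X(2,3) \<gamma>(1,2) \<gamma>'(1,2) bounds N])
    then show ?thesis unfolding haus_less_def by (intro exI[of _ B]) simp
  qed
  moreover have "0 < B + 1" using N unfolding B_def by simp
  ultimately show ?thesis by blast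
qed

end
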